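(* Let $(u_n)_{n\ge0}$ be the Tetranacci numbers, defined by $u_0=0$, $u_1=1$, $u_2=1$, $u_3=2$ and $u_{n+4}=u_{n+3}+u_{n+2}+u_{n+1}+u_n$ for $n\ge0$. For integers $n$ define $t_n=\tfrac12 u_nu_{n+2}$ if $n\ge0$ and $t_n=0$ if $n<0$. Then for every $n\ge1$, \[ \sum_{0\le k\le n}u_k^2=\frac13+\frac13\bigl(2t_{n}+t_{n-1}-t_{n-2}-t_{n-3}+5t_{n-4}+4t_{n-5}+t_{n-6}+t_{n-7}-t_{n-8}-t_{n-9}\bigr). \] *)

theory Defs
  imports Complex_Main
begin

fun tetra :: "nat \<Rightarrow> int" where
  "tetra 0 = 0"
| "tetra (Suc 0) = 1"
| "tetra (Suc (Suc 0)) = 1"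
| "tetra (Suc (Suc (Suc 0))) = 2"
| "tetra (Suc (Suc (Suc (Suc n)))) =
     tetra (Suc (Suc (Suc n))) + tetra (Suc (Suc n)) + tetra (Suc n) + tetra n"

definition tt :: "int \<Rightarrow> real" where
  "tt n = (if n \<ge> 0 then (1/2) * real_of_int (tetra (nat n) * tetra (nat n + 2)) else 0)"

end

theory Submission
  imports Defs
begin

text \<open>Let \<open>P j = x\<^sub>j x\<^sub>j\<^sub>+\<^sub>2\<close>. For any sequence obeying the Tetranacci recurrence,
  the combination \<open>F m\<close> of \<open>P (m+9), \<dots>, P m\<close> with the weights of the theorem satisfies
  \<open>F (m+1) - F m = 6 x\<^sub>m\<^sub>+\<^sub>1\<^sub>0\<^sup>2\<close>: writing every term through the four values
  \<open>x\<^sub>m, \<dots>, x\<^sub>m\<^sub>+\<^sub>3\<close> this is a polynomial identity. Hence \<open>6 \<Sum> x\<^sub>k\<^sup>2 - F\<close> is constant,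
  and for the Tetranacci numbers the constant is 2.\<close>

definition shifted_prod :: "(nat \<Rightarrow> 'a::comm_ring_1) \<Rightarrow> nat \<Rightarrow> 'a" where
  "shifted_prod x j = x j * x (j + 2)"

definition sum_squares_form :: "(nat \<Rightarrow> 'a::comm_ring_1) \<Rightarrow> nat \<Rightarrow> 'a" where
  "sum_squares_form x m =
     2 * shifted_prod x (m + 9) + shifted_prod x (m + 8) - shifted_prod x (m + 7)
     - shifted_prod x (m + 6) + 5 * shifted_prod x (m + 5) + 4 * shifted_prod x (m + 4)
     + shifted_prod x (m + 3) + shifted_prod x (m + 2) - shifted_prod x (m + 1) - shifted_prod x m"

lemma sum_squares_form_Suc:
  fixes x :: "nat \<Rightarrow> 'a::comm_ring_1"
  assumes rec: "\<And>n. x (n + 4) = x (n + 3) + x (n + 2) + x (n + 1) + x n"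
  shows "sum_squares_form x (Suc m) = sum_squares_form x m + 6 * (x (m + 10))\<^sup>2"
proof -
  note index_arith = add.assoc numeral_plus_one one_plus_numeral semiring_norm
  have x4: "x (m + 4) = x (m + 3) + x (m + 2) + x (m + 1) + x m" by (rule rec)
  have x5: "x (m + 5) = x (m + 4) + x (m + 3) + x (m + 2) + x (m + 1)"
    using rec[of "m + 1"] by (simp only: index_arith)
  have x6: "x (m + 6) = x (m + 5) + x (m + 4) + x (m + 3) + x (m + 2)"
    using rec[of "m + 2"] by (simp only: index_arith)
  have x7: "x (m + 7) = x (m + 6) + x (m + 5) + x (m + 4) + x (m + 3)"
    using rec[of "m + 3"] by (simp only: index_arith)
  have x8: "x (m + 8) = x (m + 7) + x (m + 6) + x (m + 5) + x (m + 4)"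
    using rec[of "m + 4"] by (simp only: index_arith)
  have x9: "x (m + 9) = x (m + 8) + x (m + 7) + x (m + 6) + x (m + 5)"
    using rec[of "m + 5"] by (simp only: index_arith)
  have x10: "x (m + 10) = x (m + 9) + x (m + 8) + x (m + 7) + x (m + 6)"
    using rec[of "m + 6"] by (simp only: index_arith)
  have x11: "x (m + 11) = x (m + 10) + x (m + 9) + x (m + 8) + x (m + 7)"
    using rec[of "m + 7"] by (simp only: index_arith)
  have x12: "x (m + 12) = x (m + 11) + x (m + 10) + x (m + 9) + x (m + 8)"
    using rec[of "m + 8"] by (simp only: index_arith)
  have "sum_squares_form x (Suc m) =
     2 * (x (m + 10) * x (m + 12)) + x (m + 9) * x (m + 11) - x (m + 8) * x (m + 10)
     - x (m + 7) * x (m + 9) + 5 * (x (m + 6) * x (m + 8)) + 4 * (x (m + 5) * x (m + 7))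
     + x (m + 4) * x (m + 6) + x (m + 3) * x (m + 5) - x (m + 2) * x (m + 4) - x (m + 1) * x (m + 3)"
    by (simp only: sum_squares_form_def shifted_prod_def Suc_eq_plus1 index_arith)
  moreover have "sum_squares_form x m + 6 * (x (m + 10))\<^sup>2 =
     2 * (x (m + 9) * x (m + 11)) + x (m + 8) * x (m + 10) - x (m + 7) * x (m + 9)
     - x (m + 6) * x (m + 8) + 5 * (x (m + 5) * x (m + 7)) + 4 * (x (m + 4) * x (m + 6))
     + x (m + 3) * x (m + 5) + x (m + 2) * x (m + 4) - x (m + 1) * x (m + 3) - x m * x (m + 2)
     + 6 * (x (m + 10))\<^sup>2"
    by (simp only: sum_squares_form_def shifted_prod_def Suc_eq_plus1 index_arith)
  ultimately show ?thesis
    unfolding x12 x11 x10 x9 x8 x7 x6 x5 x4 by (simp add: algebra_simps power2_eq_square)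
qed

lemma sum_squares_form_telescope:
  fixes x :: "nat \<Rightarrow> 'a::comm_ring_1"
  assumes rec: "\<And>n. x (n + 4) = x (n + 3) + x (n + 2) + x (n + 1) + x n"
  shows "6 * (\<Sum>k\<le>m + 9. (x k)\<^sup>2) - sum_squares_form x m
    = 6 * (\<Sum>k\<le>9. (x k)\<^sup>2) - sum_squares_form x 0"
proof (induction m)
  case 0
  show ?case by simp
next
  case (Suc m)
  have "(\<Sum>k\<le>Suc m + 9. (x k)\<^sup>2) = (\<Sum>k\<le>m + 9. (x k)\<^sup>2) + (x (m + 10))\<^sup>2"
    using sum.atMost_Suc[of "\<lambda>k. (x k)\<^sup>2" "m + 9"] by (simp add: add.commute)
  with Suc.IH sum_squares_form_Suc[OF rec, of m] show ?case
    by (simp add: algebra_simps)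
qed

lemma tetra_rec: "tetra (n + 4) = tetra (n + 3) + tetra (n + 2) + tetra (n + 1) + tetra n"
  by (simp add: numeral_eq_Suc)

lemma tetra_sum_squares: "6 * (\<Sum>k\<le>m + 9. (tetra k)\<^sup>2) = 2 + sum_squares_form tetra m"
proof -
  have "6 * (\<Sum>k\<le>9. (tetra k)\<^sup>2) - sum_squares_form tetra 0 = 2"
    by (simp add: sum_squares_form_def shifted_prod_def numeral_eq_Suc)
  with sum_squares_form_telescope[OF tetra_rec, of m] show ?thesis
    by (simp add: algebra_simps)
qed

lemma tt_of_nat: "tt (int j) = of_int (shifted_prod tetra j) / 2"
  by (simp add: tt_def shifted_prod_def)

theorem mainTheorem1:
  fixes n :: nat
  assumes "n \<ge> 1"
  shows "(\<Sum>k\<le>n. real_of_int ((tetra k)^2)) =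
    1/3 + 1/3 * (2 * tt (int n) + tt (int n - 1) - tt (int n - 2) - tt (int n - 3)
      + 5 * tt (int n - 4) + 4 * tt (int n - 5) + tt (int n - 6) + tt (int n - 7)
      - tt (int n - 8) - tt (int n - 9))"
proof (cases "n \<ge> 9")
  case True
  then obtain m where n: "n = m + 9"
    by (metis add.commute le_Suc_ex)
  have shifted_args: "int n - 1 = int (m + 8)" "int n - 2 = int (m + 7)" "int n - 3 = int (m + 6)"
    "int n - 4 = int (m + 5)" "int n - 5 = int (m + 4)" "int n - 6 = int (m + 3)"
    "int n - 7 = int (m + 2)" "int n - 8 = int (m + 1)" "int n - 9 = int m"
    using n by simp_all
  have "6 * (\<Sum>k\<le>n. real_of_int ((tetra k)\<^sup>2)) = 2 + of_int (sum_squares_form tetra m)"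
    using arg_cong[OF tetra_sum_squares[of m], of real_of_int] n by simp
  then show ?thesis
    unfolding shifted_args unfolding n tt_of_nat
    by (simp add: sum_squares_form_def algebra_simps)
next
  case False
  with assms have "n \<in> {1, 2, 3, 4, 5, 6, 7, 8}" by auto
  then show ?thesis
    by (auto simp: tt_def numeral_eq_Suc)
qed

end
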